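(* Let $K$ be a compact set in a metric space, let $\delta>0$ and $C>1$. Then there exists a $(\delta,C)$-discretization of $K$.
   Context: For a compact metric space $K$, $\delta>0$ and $C>1$, a $(\delta,C)$-discretization of $K$ is a finite set of points $\{x_1,\dots,x_n\}\subset K$ such that for all $x,y\in K$, $|\{i: x_i\in B(x,\delta/2)\}|< C\,|\{i: x_i\in B(y,\delta)\}|$, where $B(p,r)$ denotes the open ball of radius $r$ centered at $p$. *)

theory Defs
  imports "HOL-Analysis.Analysis"
begin

definition discretization :: "'a::metric_space set \<Rightarrow> real \<Rightarrow> real \<Rightarrow> 'a list \<Rightarrow> bool" where
  "discretization K \<delta> C xs \<longleftrightarrow>
     set xs \<subseteq> K \<and>
     (\<forall>x\<in>K. \<forall>y\<in>K.
        real (card {i. i < length xs \<and> xs ! i \<in> ball x (\<delta>/2)})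
          < C * real (card {i. i < length xs \<and> xs ! i \<in> ball y \<delta>}))"

end

theory Submission
  imports Defs
begin

text \<open>A maximal \<delta>-separated subset S of K is a discretization with every constant C > 1:
  by separation each ball of radius \<delta>/2 contains at most one point of S, and by maximality
  each ball of radius \<delta> centred in K contains at least one. Maximal separated subsets exist
  because compactness bounds the size of separated subsets: each point of one lies in its own
  ball of a fixed finite cover by balls of radius \<delta>/2.\<close>

lemma separated_card_le_cover:
  fixes S :: "'a::metric_space set"
  assumes sep: "pairwise (\<lambda>a b. \<delta> \<le> dist a b) S"
    and cover: "S \<subseteq> (\<Union>c\<in>F. ball c (\<delta>/2))" and "finite F"
  shows "finite S \<and> card S \<le> card F"
proof -
  have "\<forall>s\<in>S. \<exists>c. c \<in> F \<and> s \<in> ball c (\<delta>/2)"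
    using cover by blast
  then obtain g where g: "\<forall>s\<in>S. g s \<in> F \<and> s \<in> ball (g s) (\<delta>/2)"
    using bchoice[of S "\<lambda>s c. c \<in> F \<and> s \<in> ball c (\<delta>/2)"] by blast
  have "inj_on g S"
  proof (rule inj_onI, rule ccontr)
    fix a b assume ab: "a \<in> S" "b \<in> S" "g a = g b" "a \<noteq> b"
    have "dist a b \<le> dist (g a) a + dist (g b) b"
      using dist_triangle3[of a b "g a"] ab(3) by simp
    also have "\<dots> < \<delta>/2 + \<delta>/2"
      using g ab(1,2) by (intro add_strict_mono) auto
    also have "\<dots> = \<delta>"
      by simp
    finally have "dist a b < \<delta>" .
    moreover have "\<delta> \<le> dist a b"
      using pairwiseD(1)[OF sep ab(1,2,4)] .
    ultimately show False
      by simp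
  qed
  moreover have "g ` S \<subseteq> F"
    using g by blast
  ultimately show ?thesis
    using \<open>finite F\<close> card_inj_on_le finite_imageD finite_subset by metis
qed

lemma separated_card_inter_ball_half_le_1:
  fixes S :: "'a::metric_space set"
  assumes "pairwise (\<lambda>a b. \<delta> \<le> dist a b) S"
  shows "card (S \<inter> ball x (\<delta>/2)) \<le> 1"
proof -
  have "pairwise (\<lambda>a b. \<delta> \<le> dist a b) (S \<inter> ball x (\<delta>/2))"
    using assms by (rule pairwise_subset) blast
  then show ?thesis
    using separated_card_le_cover[of \<delta> "S \<inter> ball x (\<delta>/2)" "{x}"] by simp
qed

lemma compact_obtains_separated_net:
  fixes K :: "'a::metric_space set"
  assumes "compact K" and "\<delta> > 0"
  obtains S where "finite S" "S \<subseteq> K" "pairwise (\<lambda>a b. \<delta> \<le> dist a b) S"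
    "K \<subseteq> (\<Union>s\<in>S. ball s \<delta>)"
proof -
  obtain F where F: "finite F" "K \<subseteq> (\<Union>c\<in>F. ball c (\<delta>/2))"
    using compactE_image[OF \<open>compact K\<close>, of K "\<lambda>c. ball c (\<delta>/2)"] \<open>\<delta> > 0\<close>
    by (metis centre_in_ball half_gt_zero open_ball UN_I subsetI)
  define P where "P S \<longleftrightarrow> S \<subseteq> K \<and> pairwise (\<lambda>a b. \<delta> \<le> dist a b) S" for S
  have finite_P: "finite S \<and> card S \<le> card F" if "P S" for S
    using separated_card_le_cover[of \<delta> S F] that F unfolding P_def by blast
  have "P {}"
    by (simp add: P_def)
  moreover have "\<forall>S. P S \<longrightarrow> card S < Suc (card F)"
    using finite_P by (simp add: le_imp_less_Suc)
  ultimately obtain S where "P S" and S_max: "\<And>T. P T \<Longrightarrow> card T \<le> card S"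
    using ex_has_greatest_nat[of P "{}" card "Suc (card F)"] by blast
  have "finite S"
    using finite_P \<open>P S\<close> by blast
  moreover have "S \<subseteq> K" "pairwise (\<lambda>a b. \<delta> \<le> dist a b) S"
    using \<open>P S\<close> by (simp_all add: P_def)
  moreover have "K \<subseteq> (\<Union>s\<in>S. ball s \<delta>)"
  proof
    fix y assume "y \<in> K"
    show "y \<in> (\<Union>s\<in>S. ball s \<delta>)"
    proof (rule ccontr)
      assume far: "y \<notin> (\<Union>s\<in>S. ball s \<delta>)"
      then have "y \<notin> S"
        using \<open>\<delta> > 0\<close> by auto
      have "pairwise (\<lambda>a b. \<delta> \<le> dist a b) (insert y S)"
        using \<open>P S\<close> far by (auto simp: P_def pairwise_insert dist_commute not_less)
      then have "P (insert y S)"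
        using \<open>P S\<close> \<open>y \<in> K\<close> by (simp add: P_def)
      then have "Suc (card S) \<le> card S"
        using S_max \<open>finite S\<close> \<open>y \<notin> S\<close> by (metis card_insert_disjoint)
      then show False
        by simp
    qed
  qed
  ultimately show ?thesis
    by (rule that)
qed

lemma card_indices_distinct:
  assumes "distinct xs"
  shows "card {i. i < length xs \<and> xs ! i \<in> A} = card (set xs \<inter> A)"
proof -
  have "inj_on ((!) xs) {i. i < length xs \<and> xs ! i \<in> A}"
    using assms by (simp add: inj_on_def nth_eq_iff_index_eq)
  moreover have "(!) xs ` {i. i < length xs \<and> xs ! i \<in> A} = set xs \<inter> A"
    by (auto simp: in_set_conv_nth)
  ultimately show ?thesis
    by (metis card_image)
qed

theorem lemma1:
  fixes K :: "'a::metric_space set" and \<delta> C :: real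
  assumes "compact K" and "\<delta> > 0" and "C > 1"
  shows "\<exists>xs. discretization K \<delta> C xs"
proof -
  obtain S where S: "finite S" "S \<subseteq> K" and sep: "pairwise (\<lambda>a b. \<delta> \<le> dist a b) S"
    and net: "K \<subseteq> (\<Union>s\<in>S. ball s \<delta>)"
    using compact_obtains_separated_net[OF assms(1,2)] by blast
  obtain xs where xs: "set xs = S" "distinct xs"
    using finite_distinct_list[OF \<open>finite S\<close>] by blast
  have count: "real (card (S \<inter> ball x (\<delta>/2))) < C * real (card (S \<inter> ball y \<delta>))"
    if "y \<in> K" for x y
  proof -
    obtain s where "s \<in> S" "y \<in> ball s \<delta>"
      using net \<open>y \<in> K\<close> by blast
    then have "S \<inter> ball y \<delta> \<noteq> {}"
      by (auto simp: dist_commute)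
    then have "1 \<le> card (S \<inter> ball y \<delta>)"
      using \<open>finite S\<close> by (simp add: Suc_leI card_gt_0_iff)
    have "real (card (S \<inter> ball x (\<delta>/2))) \<le> 1"
      using separated_card_inter_ball_half_le_1[OF sep] by simp
    also have "\<dots> < C"
      using \<open>C > 1\<close> .
    also have "\<dots> \<le> C * real (card (S \<inter> ball y \<delta>))"
      using \<open>1 \<le> card (S \<inter> ball y \<delta>)\<close> \<open>C > 1\<close> by simp
    finally show ?thesis .
  qed
  then have "discretization K \<delta> C xs"
    unfolding discretization_def card_indices_distinct[OF xs(2)] xs(1)
    using S(2) count by blast
  then show ?thesis by blast
qed

end
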